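(* The polynomial $\mathbf{p}_t$ is a well-defined invariant of (oriented) virtual knots, and it is a Vassiliev invariant of degree one for virtual knots (with values in the abelian group $\mathbf{Z}[t]$).
   Context: A virtual knot diagram is an oriented closed curve immersed in the plane with finitely many transverse double points, each either a classical crossing (with over/under information) or a virtual crossing (encircled, carrying no over/under information). Virtual knots are equivalence classes of such diagrams under the classical Reidemeister moves and the virtual Reidemeister moves (moves V1, V2, V3 involving only virtual crossings, and the mixed move in which a strand containing only virtual crossings passes across a classical crossing). The sign $\operatorname{sign}(d)\in\{\pm1\}$ of a classical crossing $d$ is $+1$ if the pair (direction of over-strand, direction of under-strand) is a positively oriented basis of the plane, and $-1$ otherwise. Smoothing a diagram at a classical crossing $d$ means replacing $d$ by two non-crossing arcs in the unique way respecting orientations; this yields a two-component virtual link diagram. Order its components as $(1,2)$, forget over/under data, and set $i(d)=\sum_{x\in 1\cap 2}\operatorname{sgn}(x)$, where $1\cap 2$ is the set of classical crossings between the two components and $\operatorname{sgn}(x)=+1$ if (tangent of component 1, tangent of component 2) at $x$ is positively oriented, $-1$ otherwise; $|i(d)|$ does not depend on the ordering. For a virtual knot $K$ with diagram $\widetilde K$, $\mathbf{p}_t(K)=\sum_d \operatorname{sign}(d)\,(t^{|i(d)|}-1)\in\mathbf{Z}[t]$, summed over all classical crossings $d$ of $\widetilde K$. Singular virtual knots are virtual knots with finitely many additional transverse self-intersection points (double-points), considered up to the classical and virtual Reidemeister moves together with the standard moves involving double-points. Any invariant $V$ of virtual knots with values in an abelian group $A$ extends to singular virtual knots by the recursion $V(K)=V(K^+)-V(K^-)$,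 where $K^\pm$ is obtained by resolving a chosen double-point of $K$ into a positive, resp. negative, classical crossing (the result is independent of the order of resolution). $V$ is a Vassiliev invariant of degree $\le n$ if it vanishes on all singular virtual knots with more than $n$ double-points; the degree is the smallest such $n$. *)

theory Defs
  imports "HOL-Computational_Algebra.Polynomial" "HOL-Library.Multiset"
begin

text \<open>Virtual knots are encoded by Gauss diagrams (Goussarov--Polyak--Viro).
A Gauss diagram is a cyclic word over letters (c, b): c a crossing label,
b = True for the over passage and b = False for the under passage, read along
the oriented knot, together with a sign function on the labels.\<close>

type_synonym gword = "(nat \<times> bool) list"
type_synonym gd = "gword \<times> (nat \<Rightarrow> int)"

definition labels :: "gword \<Rightarrow> nat set" where
  "labels w = fst ` set w"

definition wf_gd :: "gword \<Rightarrow> (nat \<Rightarrow> int) \<Rightarrow> bool" where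
  "wf_gd w s \<longleftrightarrow> distinct w \<and>
     (\<forall>c\<in>labels w. (c, True) \<in> set w \<and> (c, False) \<in> set w \<and> (s c = 1 \<or> s c = -1))"

text \<open>Elementary moves: rotation of the base point, relabelling, and the
Gauss-diagram versions of all oriented Reidemeister moves R1, R2, R3
(virtual moves are invisible on Gauss diagrams).\<close>

definition r3_top :: "int \<Rightarrow> nat \<Rightarrow> nat \<Rightarrow> gword" where
  "r3_top e x y = (if e = 1 then [(x, True), (y, True)] else [(y, True), (x, True)])"
definition r3_mid :: "int \<Rightarrow> nat \<Rightarrow> nat \<Rightarrow> gword" where
  "r3_mid e x z = (if e = 1 then [(x, False), (z, True)] else [(z, True), (x, False)])"
definition r3_bot :: "int \<Rightarrow> nat \<Rightarrow> nat \<Rightarrow> gword" where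
  "r3_bot e y z = (if e = 1 then [(y, False), (z, False)] else [(z, False), (y, False)])"

inductive gd_move :: "gd \<Rightarrow> gd \<Rightarrow> bool" where
  rotate: "wf_gd (u @ v) s \<Longrightarrow> gd_move (u @ v, s) (v @ u, s)"
| relabel: "wf_gd w s \<Longrightarrow> inj_on f (labels w) \<Longrightarrow> (\<forall>c\<in>labels w. s' (f c) = s c) \<Longrightarrow>
     gd_move (w, s) (map (\<lambda>(c, b). (f c, b)) w, s')"
| R1: "wf_gd (u @ v) s \<Longrightarrow> c \<notin> labels (u @ v) \<Longrightarrow> e \<in> {1, -1} \<Longrightarrow>
     gd_move (u @ v, s) (u @ [(c, b), (c, \<not> b)] @ v, s(c := e))"
| R2: "wf_gd (u @ v @ x) s \<Longrightarrow> c \<noteq> d \<Longrightarrow> c \<notin> labels (u @ v @ x) \<Longrightarrow> d \<notin> labels (u @ v @ x) \<Longrightarrow>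
     e \<in> {1, -1} \<Longrightarrow> Q \<in> {[(c, False), (d, False)], [(d, False), (c, False)]} \<Longrightarrow>
     gd_move (u @ v @ x, s) (u @ [(c, True), (d, True)] @ v @ Q @ x, s(c := e, d := - e))"
| R3: "wf_gd (A @ P1 @ B @ P2 @ C @ P3 @ D) s \<Longrightarrow> x \<noteq> y \<Longrightarrow> x \<noteq> z \<Longrightarrow> y \<noteq> z \<Longrightarrow>
     e1 \<in> {1, -1} \<Longrightarrow> e2 \<in> {1, -1} \<Longrightarrow> e3 \<in> {1, -1} \<Longrightarrow> \<omega> \<in> {1, -1} \<Longrightarrow>
     mset [P1, P2, P3] = mset [r3_top e1 x y, r3_mid e2 x z, r3_bot e3 y z] \<Longrightarrow>
     s x = e1 * e2 * \<omega> \<Longrightarrow> s y = e1 * e3 * \<omega> \<Longrightarrow> s z = e2 * e3 * \<omega> \<Longrightarrow>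
     gd_move (A @ P1 @ B @ P2 @ C @ P3 @ D, s) (A @ rev P1 @ B @ rev P2 @ C @ rev P3 @ D, s)"

definition gd_equiv :: "gd \<Rightarrow> gd \<Rightarrow> bool" where
  "gd_equiv = (symclp gd_move)\<^sup>*\<^sup>*"

definition is_invariant :: "(gd \<Rightarrow> 'a) \<Rightarrow> bool" where
  "is_invariant V \<longleftrightarrow> (\<forall>D1 D2. wf_gd (fst D1) (snd D1) \<longrightarrow> gd_equiv D1 D2 \<longrightarrow> V D1 = V D2)"

text \<open>Smoothing at d: component 1 consists of the passages strictly between
the two occurrences of d.\<close>
definition arc :: "gword \<Rightarrow> nat \<Rightarrow> (nat \<times> bool) set" where
  "arc w d = {w ! k | k. \<exists>i j. i < k \<and> k < j \<and> j < length w \<and> fst (w ! i) = d \<and> fst (w ! j) = d}"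

text \<open>Index i(d): sum over crossings between the two components of sgn(x),
which is sign(x) if the over strand at x belongs to component 1, else -sign(x).\<close>
definition idx :: "gword \<Rightarrow> (nat \<Rightarrow> int) \<Rightarrow> nat \<Rightarrow> int" where
  "idx w s d = (\<Sum>x\<in>labels w - {d}.
      if (x, True) \<in> arc w d \<and> (x, False) \<notin> arc w d then s x
      else if (x, False) \<in> arc w d \<and> (x, True) \<notin> arc w d then - s x
      else 0)"

definition pt :: "gd \<Rightarrow> int poly" where
  "pt D = (\<Sum>d\<in>labels (fst D). smult (snd D d) (monom 1 (nat \<bar>idx (fst D) (snd D) d\<bar>) - 1))"

text \<open>Singular Gauss diagrams: a wf diagram with a set Dp of labels marked as
double points; for d in Dp the stored arrow (with sign 1) is the positive
resolution.\<close>
definition sing_wf :: "gword \<Rightarrow> (nat \<Rightarrow> int) \<Rightarrow> nat set \<Rightarrow> bool" where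
  "sing_wf w s Dp \<longleftrightarrow> wf_gd w s \<and> Dp \<subseteq> labels w \<and> (\<forall>d\<in>Dp. s d = 1)"

definition resolve :: "gword \<Rightarrow> (nat \<Rightarrow> int) \<Rightarrow> nat set \<Rightarrow> gd" where
  "resolve w s S = (map (\<lambda>(c, b). (c, if c \<in> S then \<not> b else b)) w,
                    \<lambda>c. if c \<in> S then - s c else s c)"

text \<open>Extension V(K) = V(K+) - V(K-), iterated over all double points.\<close>
definition vext :: "(gd \<Rightarrow> 'a::ab_group_add) \<Rightarrow> gword \<Rightarrow> (nat \<Rightarrow> int) \<Rightarrow> nat set \<Rightarrow> 'a" where
  "vext V w s Dp = (\<Sum>S\<in>Pow Dp. (if even (card S) then V (resolve w s S) else - V (resolve w s S)))"

definition vassiliev_le :: "(gd \<Rightarrow> 'a::ab_group_add) \<Rightarrow> nat \<Rightarrow> bool" where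
  "vassiliev_le V n \<longleftrightarrow> (\<forall>w s Dp. sing_wf w s Dp \<longrightarrow> card Dp > n \<longrightarrow> vext V w s Dp = 0)"

definition vassiliev_degree :: "(gd \<Rightarrow> 'a::ab_group_add) \<Rightarrow> nat \<Rightarrow> bool" where
  "vassiliev_degree V n \<longleftrightarrow> vassiliev_le V n \<and> (\<forall>m<n. \<not> vassiliev_le V m)"

end

theory Submission
  imports Defs
begin

text \<open>The index \<open>i(d)\<close> is the signed count of the passages lying strictly between the
two ends of the chord \<open>d\<close>, a passage counting \<open>+sign\<close> if it is an over passage and \<open>-sign\<close>
otherwise. Since every crossing contributes one over and one under passage, the passages of a
whole diagram sum to zero; so moving the base point at most negates \<open>i(d)\<close>, and inserting,
deleting or reversing a block of passages of total sum zero (resp. of fixed sum, as in R3)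
leaves the indices of all other crossings unchanged. The crossings created by R1 have index
zero, the two created by R2 have equal index and opposite signs, and R3 permutes passages
within three blocks without changing the indices of its three crossings.

Resolving a double point negatively flips both its sign and the roles of its two passages, so
no index changes; \<open>p\<^sub>t\<close> is therefore a sum of terms each depending linearly on a single
crossing sign, and the alternating sum over two or more double points vanishes. The virtual
trefoil with one double point shows that the degree is not zero.\<close>

lemma labels_Nil [simp]: "labels [] = {}"
  unfolding labels_def by simp

lemma labels_Cons [simp]: "labels (e # w) = insert (fst e) (labels w)"
  unfolding labels_def by simp

lemma labels_append [simp]: "labels (u @ v) = labels u \<union> labels v"
  unfolding labels_def by auto

lemma labels_rev [simp]: "labels (rev w) = labels w"
  unfolding labels_def by simp

lemma finite_labels [simp]: "finite (labels w)"
  unfolding labels_def by simp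

lemma mem_labels_iff: "d \<in> labels w \<longleftrightarrow> (d, True) \<in> set w \<or> (d, False) \<in> set w"
  unfolding labels_def by (auto simp: image_iff) (metis (full_types) prod.collapse, force+)

lemma passage_cases: "fst e = d \<Longrightarrow> e = (d, True) \<or> e = (d, False)"
  by (cases e) auto

lemma wf_gd_distinct: "wf_gd w s \<Longrightarrow> distinct w"
  unfolding wf_gd_def by simp

lemma wf_gd_passages:
  assumes "wf_gd w s" "d \<in> labels w"
  shows "(d, True) \<in> set w" "(d, False) \<in> set w"
  using assms unfolding wf_gd_def by simp_all

subsection \<open>The index as a sum over the interior of a chord\<close>

definition passage_sign :: "(nat \<Rightarrow> int) \<Rightarrow> nat \<times> bool \<Rightarrow> int" where
  "passage_sign s e = (if snd e then s (fst e) else - s (fst e))"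

abbreviation passage_sum :: "(nat \<Rightarrow> int) \<Rightarrow> gword \<Rightarrow> int" where
  "passage_sum s w \<equiv> sum_list (map (passage_sign s) w)"

lemma chord_ends:
  assumes "{p, q} = {(d, True), (d, False)}"
  shows "fst p = d" "fst q = d" "passage_sign s p + passage_sign s q = 0"
  using assms by (auto simp: doubleton_eq_iff passage_sign_def)

lemma passage_sum_rev [simp]: "passage_sum s (rev w) = passage_sum s w"
  by (simp add: rev_map[symmetric] sum_list_rev)

lemma passage_sum_wf_gd:
  assumes wf: "wf_gd w s"
  shows "passage_sum s w = 0"
proof -
  have "set w = labels w \<times> UNIV"
  proof
    show "set w \<subseteq> labels w \<times> UNIV" unfolding labels_def by force
    show "labels w \<times> UNIV \<subseteq> set w"
      using wf unfolding wf_gd_def by (auto simp: UNIV_bool)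
  qed
  then have "passage_sum s w = (\<Sum>c\<in>labels w. \<Sum>b\<in>UNIV. passage_sign s (c, b))"
    using wf_gd_distinct[OF wf] by (simp add: sum_list_distinct_conv_sum_set sum.cartesian_product)
  also have "\<dots> = 0"
    by (simp add: UNIV_bool passage_sign_def)
  finally show ?thesis .
qed

lemma idx_eq_sum_arc:
  assumes "arc w d \<subseteq> (labels w - {d}) \<times> UNIV"
  shows "idx w s d = (\<Sum>e\<in>arc w d. passage_sign s e)"
proof -
  have "(\<Sum>e\<in>arc w d. passage_sign s e)
      = (\<Sum>e\<in>(labels w - {d}) \<times> UNIV. if e \<in> arc w d then passage_sign s e else 0)"
    using assms by (simp add: sum.inter_restrict[symmetric] Int_absorb1)
  also have "\<dots> = (\<Sum>x\<in>labels w - {d}. \<Sum>b\<in>UNIV. if (x, b) \<in> arc w d then passage_sign s (x, b) else 0)"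
    by (simp add: sum.cartesian_product)
  also have "\<dots> = idx w s d"
    unfolding idx_def by (rule sum.cong) (auto simp: UNIV_bool passage_sign_def)
  finally show ?thesis by simp
qed

lemma arc_split:
  assumes dist: "distinct (u @ [p] @ v @ [q] @ x)" and fp: "fst p = d" and fq: "fst q = d"
  shows "arc (u @ [p] @ v @ [q] @ x) d = set v"
proof -
  define w where "w = u @ [p] @ v @ [q] @ x"
  define i0 where "i0 = length u"
  define j0 where "j0 = length u + 1 + length v"
  have w_i0: "w ! i0 = p" unfolding w_def i0_def by (simp add: nth_append)
  have w_j0: "w ! j0 = q" unfolding w_def j0_def by (simp add: nth_append)
  have lens: "i0 < j0" "j0 < length w" unfolding w_def i0_def j0_def by auto
  have pq: "p \<noteq> q" using dist by auto
  have ends: "i = i0 \<or> i = j0" if "i < length w" "fst (w ! i) = d" for i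
  proof -
    have dw: "distinct w" using dist w_def by simp
    have "w ! i = p \<or> w ! i = q"
      using passage_cases[OF that(2)] passage_cases[OF fp] passage_cases[OF fq] pq by auto
    then show ?thesis using dw lens that(1) w_i0 w_j0 nth_eq_iff_index_eq by (metis order.strict_trans)
  qed
  have "arc w d = {w ! k | k. i0 < k \<and> k < j0}"
  proof (rule set_eqI, rule iffI)
    fix e assume "e \<in> arc w d"
    then obtain k i j where "e = w ! k" "i < k" "k < j" "j < length w" "fst (w ! i) = d" "fst (w ! j) = d"
      unfolding arc_def by blast
    moreover have "i = i0 \<or> i = j0" "j = i0 \<or> j = j0" using ends calculation by auto
    ultimately show "e \<in> {w ! k | k. i0 < k \<and> k < j0}" using lens by auto
  next
    fix e assume "e \<in> {w ! k | k. i0 < k \<and> k < j0}"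
    then obtain k where "e = w ! k" "i0 < k" "k < j0" by blast
    then show "e \<in> arc w d" unfolding arc_def using lens w_i0 w_j0 fp fq by blast
  qed
  also have "\<dots> = set v"
  proof (rule set_eqI, rule iffI)
    fix e assume "e \<in> {w ! k | k. i0 < k \<and> k < j0}"
    then obtain k where k: "e = w ! k" "i0 < k" "k < j0" by blast
    have "w ! k = v ! (k - i0 - 1)" using k(2,3) unfolding w_def i0_def j0_def
      by (simp add: nth_append, arith)
    then have "e = v ! (k - i0 - 1)" using k(1) by simp
    moreover have "k - i0 - 1 < length v" using k unfolding i0_def j0_def by auto
    ultimately show "e \<in> set v" by simp
  next
    fix e assume "e \<in> set v"
    then obtain m where m: "m < length v" "e = v ! m" by (auto simp: in_set_conv_nth)
    have w_assoc: "w = (u @ [p]) @ (v @ [q] @ x)" unfolding w_def by simp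
    have offset: "i0 + 1 + m = length (u @ [p]) + m" unfolding i0_def by simp
    have "w ! (i0 + 1 + m) = (v @ [q] @ x) ! m"
      unfolding w_assoc offset by (rule nth_append_length_plus)
    also have "\<dots> = v ! m" using m(1) by (simp add: nth_append)
    finally have "e = w ! (i0 + 1 + m)" using m(2) by simp
    moreover have "i0 < i0 + 1 + m" "i0 + 1 + m < j0" using m(1) unfolding j0_def i0_def by auto
    ultimately show "e \<in> {w ! k | k. i0 < k \<and> k < j0}" by blast
  qed
  finally show ?thesis unfolding w_def .
qed

lemma idx_split:
  assumes dist: "distinct (u @ [p] @ v @ [q] @ x)" and fp: "fst p = d" and fq: "fst q = d"
  shows "idx (u @ [p] @ v @ [q] @ x) s d = passage_sum s v"
proof -
  have "set v \<subseteq> (labels (u @ [p] @ v @ [q] @ x) - {d}) \<times> UNIV"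
  proof
    fix e assume e: "e \<in> set v"
    have "fst e \<noteq> d"
    proof
      assume "fst e = d"
      then have "e = p \<or> e = q"
        using passage_cases[of e d] passage_cases[OF fp] passage_cases[OF fq] dist by auto
      then show False using e dist by auto
    qed
    moreover have "fst e \<in> labels (u @ [p] @ v @ [q] @ x)"
      unfolding labels_def using e by auto
    ultimately show "e \<in> (labels (u @ [p] @ v @ [q] @ x) - {d}) \<times> UNIV"
      by (simp add: mem_Times_iff)
  qed
  then have "idx (u @ [p] @ v @ [q] @ x) s d = (\<Sum>e\<in>set v. passage_sign s e)"
    by (simp only: idx_eq_sum_arc arc_split[OF dist fp fq])
  also have "\<dots> = passage_sum s v"
    using dist by (simp add: sum_list_distinct_conv_sum_set)
  finally show ?thesis .
qed

lemma split_list_two: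
  assumes "p \<in> set c" "q \<in> set c" "p \<noteq> q"
  obtains a1 a2 a3 p' q' where "{p', q'} = {p, q}" "c = a1 @ [p'] @ a2 @ [q'] @ a3"
proof -
  obtain c1 c2 where c: "c = c1 @ p # c2" using split_list[OF assms(1)] by blast
  then consider "q \<in> set c1" | "q \<in> set c2" using assms(2,3) by auto
  then show thesis
  proof cases
    case 1
    then obtain d1 d2 where "c1 = d1 @ q # d2" by (meson split_list)
    with c show thesis by (intro that[of q p d1 d2 c2]) auto
  next
    case 2
    then obtain d1 d2 where "c2 = d1 @ q # d2" by (meson split_list)
    with c show thesis by (intro that[of p q c1 d1 d2]) auto
  qed
qed

lemma chord_splitE:
  assumes "(d, True) \<in> set w" "(d, False) \<in> set w"
  obtains u p v q x where "w = u @ [p] @ v @ [q] @ x" "fst p = d" "fst q = d"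
proof -
  have "(d, True) \<noteq> (d, False)" by simp
  then obtain u p v q x where ends: "{p, q} = {(d, True), (d, False)}" and w: "w = u @ [p] @ v @ [q] @ x"
    by (rule split_list_two[OF assms])
  have "fst p = d" "fst q = d" using ends by (auto simp: doubleton_eq_iff)
  with w show thesis by (rule that)
qed

lemma chord_split_append:
  assumes "(d, True) \<in> set (a @ b)" "(d, False) \<in> set (a @ b)"
  obtains (left) a1 p a2 q a3 where "a = a1 @ [p] @ a2 @ [q] @ a3" "fst p = d" "fst q = d"
    | (right) b1 p b2 q b3 where "b = b1 @ [p] @ b2 @ [q] @ b3" "fst p = d" "fst q = d"
    | (across) a1 p a2 b1 q b2 where "a = a1 @ [p] @ a2" "b = b1 @ [q] @ b2"
        "{p, q} = {(d, True), (d, False)}"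
proof -
  consider "(d, True) \<in> set a" "(d, False) \<in> set a" | "(d, True) \<in> set b" "(d, False) \<in> set b"
    | "(d, True) \<in> set a" "(d, False) \<in> set b" | "(d, False) \<in> set a" "(d, True) \<in> set b"
    using assms by auto
  then show thesis
  proof cases
    case 1
    then obtain a1 p a2 q a3 where "a = a1 @ [p] @ a2 @ [q] @ a3" "fst p = d" "fst q = d"
      by (rule chord_splitE)
    then show thesis by (rule left)
  next
    case 2
    then obtain b1 p b2 q b3 where "b = b1 @ [p] @ b2 @ [q] @ b3" "fst p = d" "fst q = d"
      by (rule chord_splitE)
    then show thesis by (rule right)
  next
    case 3
    then obtain a1 a2 b1 b2 where "a = a1 @ [(d, True)] @ a2" "b = b1 @ [(d, False)] @ b2"
      by (metis append_Cons append_Nil split_list)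
    then show thesis by (rule across) simp
  next
    case 4
    then obtain a1 a2 b1 b2 where "a = a1 @ [(d, False)] @ a2" "b = b1 @ [(d, True)] @ b2"
      by (metis append_Cons append_Nil split_list)
    then show thesis by (rule across) auto
  qed
qed

lemma idx_replace_block:
  assumes dist: "distinct (a @ m @ b)" "distinct (a @ m' @ b)"
    and sum: "passage_sum s m = passage_sum s m'"
    and "(d, True) \<in> set (a @ b)" "(d, False) \<in> set (a @ b)"
  shows "idx (a @ m @ b) s d = idx (a @ m' @ b) s d"
  using assms(4,5)
proof (cases rule: chord_split_append)
  case (left a1 p a2 q a3)
  then show ?thesis
    using idx_split[of a1 p a2 q "a3 @ m @ b" d s] idx_split[of a1 p a2 q "a3 @ m' @ b" d s] dist
    by simp
next
  case (right b1 p b2 q b3)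
  then show ?thesis
    using idx_split[of "a @ m @ b1" p b2 q b3 d s] idx_split[of "a @ m' @ b1" p b2 q b3 d s] dist
    by simp
next
  case (across a1 p a2 b1 q b2)
  then have "fst p = d" "fst q = d" by (simp_all add: chord_ends)
  then show ?thesis
    using idx_split[of a1 p "a2 @ m @ b1" q b2 d s] idx_split[of a1 p "a2 @ m' @ b1" q b2 d s]
      dist sum across(1,2) by simp
qed

lemma abs_idx_rotate:
  assumes wf: "wf_gd (u @ v) s" and d: "d \<in> labels (u @ v)"
  shows "\<bar>idx (v @ u) s d\<bar> = \<bar>idx (u @ v) s d\<bar>"
proof -
  have dist: "distinct (u @ v)" "distinct (v @ u)" using wf_gd_distinct[OF wf] by auto
  from wf_gd_passages[OF wf d] show ?thesis
  proof (cases rule: chord_split_append)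
    case (left a1 p a2 q a3)
    then show ?thesis
      using idx_split[of a1 p a2 q "a3 @ v" d s] idx_split[of "v @ a1" p a2 q a3 d s] dist by simp
  next
    case (right b1 p b2 q b3)
    then show ?thesis
      using idx_split[of "u @ b1" p b2 q b3 d s] idx_split[of b1 p b2 q "b3 @ u" d s] dist by simp
  next
    case (across a1 p a2 b1 q b2)
    note ends = chord_ends(1,2)[OF across(3)] chord_ends(3)[OF across(3), of s]
    have "idx (u @ v) s d = passage_sum s a2 + passage_sum s b1"
      using idx_split[of a1 p "a2 @ b1" q b2 d s] dist across ends by simp
    moreover have "idx (v @ u) s d = passage_sum s b2 + passage_sum s a1"
      using idx_split[of b1 q "b2 @ a1" p a2 d s] dist across ends by simp
    moreover have "passage_sum s (u @ v) = 0" by (rule passage_sum_wf_gd[OF wf])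
    ultimately have "idx (v @ u) s d = - idx (u @ v) s d"
      using across(1,2) ends(3) by simp
    then show ?thesis by simp
  qed
qed

lemma idx_map_passages:
  assumes dist: "distinct w" and "(d, True) \<in> set w" "(d, False) \<in> set w"
    and inj: "inj_on g (set w)" and label: "\<forall>e\<in>set w. fst (g e) = f (fst e)"
    and sign: "\<forall>e\<in>set w. passage_sign s' (g e) = passage_sign s e"
  shows "idx (map g w) s' (f d) = idx w s d"
proof -
  obtain u p v q x where w: "w = u @ [p] @ v @ [q] @ x" and ends: "fst p = d" "fst q = d"
    using assms(2,3) by (rule chord_splitE)
  have "distinct (map g w)" using dist inj by (simp add: distinct_map)
  then have "distinct (map g u @ [g p] @ map g v @ [g q] @ map g x)" using w by simp
  moreover have "fst (g p) = f d" "fst (g q) = f d" using label ends w by auto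
  ultimately have "idx (map g w) s' (f d) = passage_sum s' (map g v)"
    unfolding w by (simp add: idx_split del: append.simps)
  also have "\<dots> = passage_sum s v"
    using sign w by (simp cong: map_cong)
  also have "\<dots> = idx w s d"
    using idx_split[of u p v q x d s] dist w ends by simp
  finally show ?thesis .
qed

lemma idx_cong_signs:
  assumes "\<forall>c\<in>labels w. s c = s' c"
  shows "idx w s d = idx w s' d"
  unfolding idx_def using assms by (intro sum.cong) auto

definition chord_interior :: "gword \<Rightarrow> nat \<Rightarrow> gword" where
  "chord_interior w d = takeWhile (\<lambda>e. fst e \<noteq> d) (tl (dropWhile (\<lambda>e. fst e \<noteq> d) w))"

text \<open>An executable description of the passages between the ends of a chord, so that concrete
indices can be computed by simplification.\<close>

lemma idx_eq_chord_interior: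
  assumes dist: "distinct w" and "(d, True) \<in> set w" "(d, False) \<in> set w"
  shows "idx w s d = passage_sum s (chord_interior w d)"
proof -
  obtain u p v q x where w: "w = u @ [p] @ v @ [q] @ x" and ends: "fst p = d" "fst q = d"
    using assms(2,3) by (rule chord_splitE)
  have "fst e \<noteq> d" if "e \<in> set u \<or> e \<in> set v" for e
    using that passage_cases[of e d] passage_cases[OF ends(1)] passage_cases[OF ends(2)] dist w
    by auto
  with ends have "chord_interior w d = v"
    unfolding w chord_interior_def by (simp add: dropWhile_append2 takeWhile_append2)
  then show ?thesis using idx_split[of u p v q x d s] dist w ends by simp
qed

subsection \<open>Invariance under the moves\<close>

definition pt_summand :: "gword \<Rightarrow> (nat \<Rightarrow> int) \<Rightarrow> nat \<Rightarrow> int poly" where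
  "pt_summand w s d = smult (s d) (monom 1 (nat \<bar>idx w s d\<bar>) - 1)"

lemma pt_eq_sum: "pt (w, s) = (\<Sum>d\<in>labels w. pt_summand w s d)"
  unfolding pt_def pt_summand_def by simp

lemma pt_extend:
  assumes labels: "labels w' = labels w \<union> N" "labels w \<inter> N = {}"
    and new: "(\<Sum>d\<in>N. pt_summand w' s' d) = 0"
    and old: "\<And>d. d \<in> labels w \<Longrightarrow> s' d = s d \<and> \<bar>idx w' s' d\<bar> = \<bar>idx w s d\<bar>"
  shows "pt (w', s') = pt (w, s)"
proof -
  have "finite N" using finite_labels[of w'] labels(1) by simp
  then have "pt (w', s') = (\<Sum>d\<in>labels w. pt_summand w' s' d) + (\<Sum>d\<in>N. pt_summand w' s' d)"
    unfolding pt_eq_sum labels(1) using labels(2) by (simp add: sum.union_disjoint)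
  also have "\<dots> = pt (w, s)"
    unfolding pt_eq_sum new using old by (simp add: pt_summand_def)
  finally show ?thesis .
qed

lemma pt_rotate:
  assumes "wf_gd (u @ v) s"
  shows "pt (v @ u, s) = pt (u @ v, s)"
  by (rule pt_extend[where N = "{}"]) (auto simp: abs_idx_rotate[OF assms])

lemma pt_relabel:
  assumes wf: "wf_gd w s" and inj: "inj_on f (labels w)" and s': "\<forall>c\<in>labels w. s' (f c) = s c"
  shows "pt (map (\<lambda>(c, b). (f c, b)) w, s') = pt (w, s)"
proof -
  define g where "g = (\<lambda>(c::nat, b::bool). (f c, b))"
  have inj_g: "inj_on g (set w)"
  proof (rule inj_onI)
    fix e e' assume "e \<in> set w" "e' \<in> set w" "g e = g e'"
    then have "fst e \<in> labels w" "fst e' \<in> labels w" "f (fst e) = f (fst e')" "snd e = snd e'"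
      unfolding labels_def g_def by (simp_all add: split_beta)
    then show "e = e'" using inj by (simp add: prod_eq_iff inj_onD)
  qed
  have labels_g: "labels (map g w) = f ` labels w"
    unfolding labels_def g_def by (force simp: image_image)
  have idx_g: "idx (map g w) s' (f d) = idx w s d" if "d \<in> labels w" for d
  proof (rule idx_map_passages[OF wf_gd_distinct[OF wf] wf_gd_passages[OF wf that] inj_g])
    show "\<forall>e\<in>set w. fst (g e) = f (fst e)" unfolding g_def by auto
    show "\<forall>e\<in>set w. passage_sign s' (g e) = passage_sign s e"
      using s' unfolding g_def passage_sign_def labels_def by auto
  qed
  have "pt (map g w, s') = (\<Sum>d\<in>labels w. pt_summand (map g w) s' (f d))"
    unfolding pt_eq_sum labels_g by (simp add: sum.reindex[OF inj])
  also have "\<dots> = pt (w, s)"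
    unfolding pt_eq_sum using s' idx_g by (simp add: pt_summand_def)
  finally show ?thesis unfolding g_def .
qed

lemma notin_labels_passage: "c \<notin> labels w \<Longrightarrow> (c, b) \<notin> set w"
  by (simp add: mem_labels_iff) (cases b; simp)

lemma pt_R1:
  assumes wf: "wf_gd (u @ v) s" and c: "c \<notin> labels (u @ v)"
  shows "pt (u @ [(c, b), (c, \<not> b)] @ v, s(c := e)) = pt (u @ v, s)"
proof (rule pt_extend[where N = "{c}"])
  let ?w = "u @ [(c, b), (c, \<not> b)] @ v"
  have dist: "distinct ?w"
    using wf_gd_distinct[OF wf] notin_labels_passage[OF c] by auto
  have "idx (u @ [(c, b)] @ [] @ [(c, \<not> b)] @ v) (s(c := e)) c = 0"
    using dist by (subst idx_split) auto
  then show "(\<Sum>d\<in>{c}. pt_summand ?w (s(c := e)) d) = 0"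
    by (simp add: pt_summand_def)
  fix d assume d: "d \<in> labels (u @ v)"
  then have "idx ?w (s(c := e)) d = idx (u @ [] @ v) (s(c := e)) d"
    using dist wf_gd_passages[OF wf d]
    by (intro idx_replace_block) (auto simp: passage_sign_def)
  also have "\<dots> = idx (u @ v) s d"
    using c by (auto intro: idx_cong_signs)
  finally show "(s(c := e)) d = s d \<and> \<bar>idx ?w (s(c := e)) d\<bar> = \<bar>idx (u @ v) s d\<bar>"
    using c d by auto
qed (use c in auto)

lemma pt_R2:
  assumes wf: "wf_gd (u @ v @ x) s" and "c \<noteq> d"
    and c: "c \<notin> labels (u @ v @ x)" and d: "d \<notin> labels (u @ v @ x)"
    and Q: "Q \<in> {[(c, False), (d, False)], [(d, False), (c, False)]}"
  shows "pt (u @ [(c, True), (d, True)] @ v @ Q @ x, s(c := e, d := - e)) = pt (u @ v @ x, s)"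
proof (rule pt_extend[where N = "{c, d}"])
  define s' where "s' = s(c := e, d := - e)"
  let ?w = "u @ [(c, True), (d, True)] @ v @ Q @ x"
  have s': "s' c = e" "s' d = - e" unfolding s'_def using \<open>c \<noteq> d\<close> by auto
  have dist: "distinct ?w"
    using wf_gd_distinct[OF wf] notin_labels_passage[OF c] notin_labels_passage[OF d] Q \<open>c \<noteq> d\<close>
    by auto
  have "\<forall>e\<in>set u \<union> set v \<union> set x. fst e \<noteq> c \<and> fst e \<noteq> d"
    using c d unfolding labels_def by force
  then have "passage_sum s' (chord_interior ?w c) = passage_sum s' (chord_interior ?w d)"
    using Q \<open>c \<noteq> d\<close> s'
    by (auto simp: chord_interior_def dropWhile_append takeWhile_append passage_sign_def)
  moreover have "(c, True) \<in> set ?w" "(c, False) \<in> set ?w" "(d, True) \<in> set ?w" "(d, False) \<in> set ?w"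
    using Q by auto
  ultimately have "idx ?w s' c = idx ?w s' d"
    using dist by (simp add: idx_eq_chord_interior)
  then show "(\<Sum>k\<in>{c, d}. pt_summand ?w s' k) = 0"
    using \<open>c \<noteq> d\<close> s' by (simp add: pt_summand_def smult_minus_left)
  fix k assume k: "k \<in> labels (u @ v @ x)"
  then have "idx ((u @ [(c, True), (d, True)] @ v) @ Q @ x) s' k
      = idx ((u @ [(c, True), (d, True)] @ v) @ [] @ x) s' k"
    using dist wf_gd_passages[OF wf k] Q s' by (intro idx_replace_block) (auto simp: passage_sign_def)
  also have "\<dots> = idx (u @ [(c, True), (d, True)] @ (v @ x)) s' k"
    by simp
  also have "\<dots> = idx (u @ [] @ (v @ x)) s' k"
    using dist wf_gd_passages[OF wf k] s' by (intro idx_replace_block) (auto simp: passage_sign_def)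
  also have "\<dots> = idx (u @ v @ x) s k"
    using c d unfolding s'_def by (auto intro: idx_cong_signs)
  finally show "s' k = s k \<and> \<bar>idx ?w s' k\<bar> = \<bar>idx (u @ v @ x) s k\<bar>"
    using c d k unfolding s'_def by auto
qed (use Q c d in auto)

lemma mset_eq_three_cases:
  assumes "mset [a, b, c] = mset [x, y, z]"
  shows "[a, b, c] \<in> {[x, y, z], [x, z, y], [y, x, z], [y, z, x], [z, x, y], [z, y, x]}"
  using assms by (auto simp: add_eq_conv_ex)

lemma r3_passages:
  assumes "mset [P1, P2, P3] = mset [r3_top e1 x y, r3_mid e2 x z, r3_bot e3 y z]"
  shows "set P1 \<union> set P2 \<union> set P3
    = {(x, True), (y, True), (x, False), (z, True), (y, False), (z, False)}"
proof -
  have "{P1, P2, P3} = {r3_top e1 x y, r3_mid e2 x z, r3_bot e3 y z}"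
    using arg_cong[OF assms, of set_mset] by simp
  then have "\<Union> (set ` {P1, P2, P3}) = \<Union> (set ` {r3_top e1 x y, r3_mid e2 x z, r3_bot e3 y z})"
    by simp
  then show ?thesis
    by (auto simp: r3_top_def r3_mid_def r3_bot_def split: if_splits)
qed

text \<open>A case check over the order of the three blocks, the signs \<open>e1, e2, e3\<close> and the
crossing; the sign conditions are what makes the passages moving into and out of the chord
cancel.\<close>

lemma idx_R3_crossing:
  assumes dist: "distinct (A @ P1 @ B @ P2 @ C @ P3 @ D)"
    and xyz: "x \<noteq> y" "x \<noteq> z" "y \<noteq> z"
    and es: "e1 \<in> {1, -1}" "e2 \<in> {1, -1}" "e3 \<in> {1, -1}"
    and blocks: "mset [P1, P2, P3] = mset [r3_top e1 x y, r3_mid e2 x z, r3_bot e3 y z]"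
    and signs: "s x = e1 * e2 * \<omega>" "s y = e1 * e3 * \<omega>" "s z = e2 * e3 * \<omega>"
    and c: "c \<in> {x, y, z}"
  shows "idx (A @ rev P1 @ B @ rev P2 @ C @ rev P3 @ D) s c = idx (A @ P1 @ B @ P2 @ C @ P3 @ D) s c"
proof -
  define W where "W = A @ P1 @ B @ P2 @ C @ P3 @ D"
  define V where "V = A @ rev P1 @ B @ rev P2 @ C @ rev P3 @ D"
  note passages = r3_passages[OF blocks]
  have disjoint: "set L \<inter> (set P1 \<union> set P2 \<union> set P3) = {}" if "L \<in> {A, B, C, D}" for L
    using dist that by auto
  have outside: "\<forall>e\<in>set L. fst e \<noteq> k" if "L \<in> {A, B, C, D}" "k \<in> {x, y, z}" for L k
  proof (intro ballI notI)
    fix e assume "e \<in> set L" "fst e = k"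
    moreover from \<open>fst e = k\<close> have "e = (k, True) \<or> e = (k, False)" by (rule passage_cases)
    ultimately show False using that passages disjoint[OF that(1)] by auto
  qed
  have "\<forall>e\<in>set A. fst e \<noteq> x" "\<forall>e\<in>set A. fst e \<noteq> y" "\<forall>e\<in>set A. fst e \<noteq> z"
    and "\<forall>e\<in>set B. fst e \<noteq> x" "\<forall>e\<in>set B. fst e \<noteq> y" "\<forall>e\<in>set B. fst e \<noteq> z"
    and "\<forall>e\<in>set C. fst e \<noteq> x" "\<forall>e\<in>set C. fst e \<noteq> y" "\<forall>e\<in>set C. fst e \<noteq> z"
    and "\<forall>e\<in>set D. fst e \<noteq> x" "\<forall>e\<in>set D. fst e \<noteq> y" "\<forall>e\<in>set D. fst e \<noteq> z"
    using outside by auto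
  note outside = this
  have "distinct W" "distinct V" "set V = set W" using dist unfolding W_def V_def by auto
  moreover have "(c, True) \<in> set W" "(c, False) \<in> set W" using c passages unfolding W_def by auto
  moreover have "passage_sum s (chord_interior V c) = passage_sum s (chord_interior W c)"
  proof -
    have "[P1, P2, P3] = [r3_top e1 x y, r3_mid e2 x z, r3_bot e3 y z]
      \<or> [P1, P2, P3] = [r3_top e1 x y, r3_bot e3 y z, r3_mid e2 x z]
      \<or> [P1, P2, P3] = [r3_mid e2 x z, r3_top e1 x y, r3_bot e3 y z]
      \<or> [P1, P2, P3] = [r3_mid e2 x z, r3_bot e3 y z, r3_top e1 x y]
      \<or> [P1, P2, P3] = [r3_bot e3 y z, r3_top e1 x y, r3_mid e2 x z]
      \<or> [P1, P2, P3] = [r3_bot e3 y z, r3_mid e2 x z, r3_top e1 x y]"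
      using mset_eq_three_cases[OF blocks] by simp
    moreover have "e1 = 1 \<or> e1 = -1" "e2 = 1 \<or> e2 = -1" "e3 = 1 \<or> e3 = -1" "c = x \<or> c = y \<or> c = z"
      using es c by auto
    ultimately show ?thesis
      unfolding V_def W_def
      by (elim disjE; simp add: chord_interior_def dropWhile_append takeWhile_append
            r3_top_def r3_mid_def r3_bot_def passage_sign_def xyz xyz[symmetric] outside signs)
  qed
  ultimately show ?thesis
    unfolding V_def[symmetric] W_def[symmetric] by (simp add: idx_eq_chord_interior)
qed

lemma pt_R3:
  assumes wf: "wf_gd (A @ P1 @ B @ P2 @ C @ P3 @ D) s"
    and xyz: "x \<noteq> y" "x \<noteq> z" "y \<noteq> z"
    and es: "e1 \<in> {1, -1}" "e2 \<in> {1, -1}" "e3 \<in> {1, -1}"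
    and blocks: "mset [P1, P2, P3] = mset [r3_top e1 x y, r3_mid e2 x z, r3_bot e3 y z]"
    and signs: "s x = e1 * e2 * \<omega>" "s y = e1 * e3 * \<omega>" "s z = e2 * e3 * \<omega>"
  shows "pt (A @ rev P1 @ B @ rev P2 @ C @ rev P3 @ D, s) = pt (A @ P1 @ B @ P2 @ C @ P3 @ D, s)"
proof (rule pt_extend[where N = "{}"])
  let ?W = "A @ P1 @ B @ P2 @ C @ P3 @ D" and ?V = "A @ rev P1 @ B @ rev P2 @ C @ rev P3 @ D"
  have dist: "distinct ?W" by (rule wf_gd_distinct[OF wf])
  fix k assume k: "k \<in> labels ?W"
  have "idx ?V s k = idx ?W s k"
  proof (cases "k \<in> {x, y, z}")
    case True
    then show ?thesis by (rule idx_R3_crossing[OF dist xyz es blocks signs])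
  next
    case False
    then have "(k, b) \<notin> set P1 \<union> set P2 \<union> set P3" for b
      using r3_passages[OF blocks] by auto
    then have outside: "(k, b) \<in> set ?W \<Longrightarrow> (k, b) \<in> set (A @ B @ C @ D)" for b
      by auto
    note passages = outside[OF wf_gd_passages(1)[OF wf k]] outside[OF wf_gd_passages(2)[OF wf k]]
    have "idx (A @ rev P1 @ (B @ rev P2 @ C @ rev P3 @ D)) s k
        = idx (A @ P1 @ (B @ rev P2 @ C @ rev P3 @ D)) s k"
      by (rule idx_replace_block) (use dist passages in auto)
    also have "\<dots> = idx ((A @ P1 @ B) @ rev P2 @ (C @ rev P3 @ D)) s k" by simp
    also have "\<dots> = idx ((A @ P1 @ B) @ P2 @ (C @ rev P3 @ D)) s k"
      by (rule idx_replace_block) (use dist passages in auto)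
    also have "\<dots> = idx ((A @ P1 @ B @ P2 @ C) @ rev P3 @ D) s k" by simp
    also have "\<dots> = idx ((A @ P1 @ B @ P2 @ C) @ P3 @ D) s k"
      by (rule idx_replace_block) (use dist passages in auto)
    finally show ?thesis by simp
  qed
  then show "s k = s k \<and> \<bar>idx ?V s k\<bar> = \<bar>idx ?W s k\<bar>" by simp
qed auto

lemma gd_move_pt: "gd_move D D' \<Longrightarrow> pt D' = pt D"
proof (induction rule: gd_move.induct)
  case (rotate u v s)
  then show ?case by (rule pt_rotate)
next
  case (relabel w s f s')
  then show ?case by (rule pt_relabel)
next
  case (R1 u v s c e b)
  from R1.hyps(1,2) show ?case by (rule pt_R1)
next
  case (R2 u v x s c d e Q)
  from R2.hyps(1-4,6) show ?case by (rule pt_R2)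
next
  case (R3 A P1 B P2 C P3 D s x y z e1 e2 e3 \<omega>)
  from R3.hyps(1-7,9-12) show ?case by (rule pt_R3)
qed

lemma gd_equiv_pt: "gd_equiv D D' \<Longrightarrow> pt D' = pt D"
  unfolding gd_equiv_def
  by (induction rule: rtranclp_induct) (auto elim!: symclpE dest: gd_move_pt)

lemma is_invariant_pt: "is_invariant pt"
  unfolding is_invariant_def by (metis gd_equiv_pt)

subsection \<open>Degree one\<close>

lemma alternating_sum_Pow_eq_0:
  fixes G :: "'b set \<Rightarrow> 'a::ab_group_add"
  assumes fin: "finite A" and e: "e \<in> A" and G: "\<And>T. G (insert e T) = G T"
  shows "(\<Sum>S\<in>Pow A. if even (card S) then G S else - G S) = 0"
proof -
  define f where "f S = (if even (card S) then G S else - G S)" for S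
  define A' where "A' = A - {e}"
  have A: "A = insert e A'" and e': "e \<notin> A'" and fin': "finite A'"
    using e fin unfolding A'_def by auto
  have inj: "inj_on (insert e) (Pow A')"
  proof (rule inj_onI)
    fix X Y assume "X \<in> Pow A'" "Y \<in> Pow A'" "insert e X = insert e Y"
    then show "X = Y" using e' insert_ident[of e X Y] by blast
  qed
  have flip: "f (insert e T) = - f T" if "T \<in> Pow A'" for T
  proof -
    have "finite T" "e \<notin> T" using that fin' e' finite_subset by auto
    then show ?thesis unfolding f_def G by simp
  qed
  have "Pow A = Pow A' \<union> insert e ` Pow A'" "Pow A' \<inter> insert e ` Pow A' = {}"
    unfolding A Pow_insert using e' by auto
  then have "(\<Sum>S\<in>Pow A. f S) = (\<Sum>S\<in>Pow A'. f S) + (\<Sum>S\<in>insert e ` Pow A'. f S)"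
    using fin' by (simp add: sum.union_disjoint)
  also have "\<dots> = (\<Sum>S\<in>Pow A'. f S) + (\<Sum>T\<in>Pow A'. f (insert e T))"
    by (simp add: sum.reindex[OF inj])
  also have "\<dots> = 0"
    by (simp add: flip sum_negf)
  finally show ?thesis unfolding f_def .
qed

lemma labels_resolve [simp]: "labels (fst (resolve w s S)) = labels w"
  unfolding resolve_def labels_def by (force simp: image_image split_def)

text \<open>Resolving a crossing negatively flips both its sign and the roles of its two passages, so
every passage keeps its passage sign.\<close>

lemma idx_resolve:
  assumes wf: "wf_gd w s" and d: "d \<in> labels w"
  shows "idx (fst (resolve w s S)) (snd (resolve w s S)) d = idx w s d"
proof -
  define g where "g = (\<lambda>(c::nat, b::bool). (c, if c \<in> S then \<not> b else b))"
  have "resolve w s S = (map g w, \<lambda>c. if c \<in> S then - s c else s c)"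
    unfolding resolve_def g_def by simp
  moreover have "inj_on g (set w)" unfolding g_def by (rule inj_onI) (auto split: if_splits)
  ultimately show ?thesis
    using idx_map_passages[OF wf_gd_distinct[OF wf] wf_gd_passages[OF wf d], of g "\<lambda>c. c"]
    by (simp add: g_def passage_sign_def split_beta)
qed

lemma pt_resolve:
  assumes "wf_gd w s"
  shows "pt (resolve w s S) = (\<Sum>d\<in>labels w. if d \<in> S then - pt_summand w s d else pt_summand w s d)"
  unfolding pt_def labels_resolve
  using idx_resolve[OF assms] by (intro sum.cong) (auto simp: resolve_def pt_summand_def)

lemma vext_pt:
  assumes "wf_gd w s"
  shows "vext pt w s Dp = (\<Sum>d\<in>labels w. \<Sum>S\<in>Pow Dp.
    let G = (if d \<in> S then - pt_summand w s d else pt_summand w s d) in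
    if even (card S) then G else - G)"
proof -
  have "vext pt w s Dp = (\<Sum>S\<in>Pow Dp. \<Sum>d\<in>labels w.
    let G = (if d \<in> S then - pt_summand w s d else pt_summand w s d) in
    if even (card S) then G else - G)"
    unfolding vext_def pt_resolve[OF assms] by (intro sum.cong) (auto simp: Let_def sum_negf)
  then show ?thesis by (simp only: sum.swap[of _ "Pow Dp"])
qed

lemma vassiliev_le_pt_1: "vassiliev_le pt 1"
  unfolding vassiliev_le_def
proof (intro allI impI)
  fix w s Dp assume sing: "sing_wf w s Dp" and "1 < card Dp"
  have wf: "wf_gd w s" using sing unfolding sing_wf_def by simp
  have fin: "finite Dp" using \<open>1 < card Dp\<close> card.infinite by fastforce
  have "(\<Sum>S\<in>Pow Dp. let G = (if d \<in> S then - pt_summand w s d else pt_summand w s d) in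
      if even (card S) then G else - G) = 0" for d
  proof -
    have "\<not> Dp \<subseteq> {d}" using \<open>1 < card Dp\<close> card_mono[of "{d}" Dp] by auto
    then obtain e where "e \<in> Dp" "e \<noteq> d" by blast
    then show ?thesis
      unfolding Let_def by (intro alternating_sum_Pow_eq_0[OF fin]) auto
  qed
  then show "vext pt w s Dp = 0" unfolding vext_pt[OF wf] by simp
qed

text \<open>The witness is the virtual trefoil with one crossing made a double point: the two
resolutions differ by \<open>2(t - 1)\<close>.\<close>

lemma not_vassiliev_le_pt_0: "\<not> vassiliev_le pt 0"
proof
  assume le0: "vassiliev_le pt 0"
  define w :: gword where "w = [(0, True), (1, True), (0, False), (1, False)]"
  define s :: "nat \<Rightarrow> int" where "s = (\<lambda>_. 1)"
  have labels: "labels w = {0, 1}" unfolding w_def labels_def by auto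
  have wf: "wf_gd w s" unfolding wf_gd_def labels unfolding w_def s_def by simp
  have "idx w s 0 = 1"
    using idx_split[of "[]" "(0, True)" "[(1, True)]" "(0, False)" "[(1, False)]" 0 s]
    unfolding w_def s_def by (simp add: passage_sign_def)
  then have "vext pt w s {0} = 2 * monom 1 1 - 2"
    unfolding vext_pt[OF wf] labels by (simp add: Pow_insert pt_summand_def s_def Let_def)
  moreover have "sing_wf w s {0}" unfolding sing_wf_def using wf labels by (simp add: s_def)
  with le0 have "vext pt w s {0} = 0" unfolding vassiliev_le_def by simp
  ultimately have "coeff (2 * monom 1 1 - 2 :: int poly) 1 = 0" by simp
  then show False by (simp add: mult_2 coeff_monom numeral_poly)
qed

theorem mainTheorem2:
  shows "is_invariant pt \<and> vassiliev_degree pt 1"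
  unfolding vassiliev_degree_def
  using is_invariant_pt vassiliev_le_pt_1 not_vassiliev_le_pt_0 by auto

end
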